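(* Let $N\ge1$ and let $\mathbf U$ be an $N\times N$ unitary-like matrix with rows $\mathbf u^0,\dots,\mathbf u^{N-1}$; let $\mathbb A=\{\mathbf u^0,\dots,\mathbf u^{N-1}\}$ (a set of $N$ sequences of length $N$). Partition $\mathbb A$ arbitrarily into nonempty subsets $\mathbb A^{(0)},\dots,\mathbb A^{(P-1)}$, and index the elements of each subset arbitrarily as $\mathbb A^{(p)}=(\mathbf a^{(p)}_0,\dots,\mathbf a^{(p)}_{n_p-1})$ with $n_p=|\mathbb A^{(p)}|$. For each $p$, choose an arbitrary $n_p\times n_p$ unitary-like matrix $\mathbf U^{(p)}$ with rows $\mathbf u^{(p),0},\dots,\mathbf u^{(p),n_p-1}$. For $0\le p<P$ and $0\le m<n_p$ define the sequence $$\mathbf s^{(p,m)}=\mathbf u^{(p),m}\odot\mathbb A^{(p)}=\big(u^{(p),m}_0\mathbf a^{(p)}_0\ \ u^{(p),m}_1\mathbf a^{(p)}_1\ \cdots\ u^{(p),m}_{n_p-1}\mathbf a^{(p)}_{n_p-1}\big)$$ of length $n_pN$. Then the family of the $N$ sequences $\{\mathbf s^{(p,m)}: 0\le p<P,\ 0\le m<n_p\}$ is an optimal $(N,1,\mathbb L)$-$N$-CO-SF, where $\mathbb L$ is the set of distinct values among $\{n_pN\}_{p}$.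
   Context: All sequences are finite complex sequences. A sequence $\mathbf s=(s_0,\dots,s_{L-1})$ of length $L$ is identified with the function $s:\mathbb Z\to\mathbb C$ given by $s(n)=s_n$ for $0\le n<L$ and $s(n)=0$ otherwise. For sequences $\mathbf s,\mathbf s'$ of lengths $L,L'$ (possibly different), the aperiodic correlation is $R_{\mathbf s,\mathbf s'}(\tau)=\sum_{l=0}^{L-1}s(l)\,\overline{s'(l+\tau)}$ for $\tau\in\mathbb Z$. The energy of $\mathbf s$ is $E_{\mathbf s}=R_{\mathbf s,\mathbf s}(0)$. An $(M,1,\mathbb L)$-$N$-shift cross-orthogonal sequence family ($N$-CO-SF) is an indexed family $(\mathbf s^0,\dots,\mathbf s^{M-1})$ of complex sequences, where $\mathbf s^m$ has length $L^{(m)}$ divisible by $N$, and $\mathbb L$ is the set of distinct values among $L^{(0)},\dots,L^{(M-1)}$, such that for all $0\le m,m'<M$ and all $k\in\mathbb Z$, $R_{\mathbf s^m,\mathbf s^{m'}}(kN)=E_{\mathbf s^m}\,\delta(m-m')\,\delta(k)$, where $\delta$ is the Kronecker delta. An $(M,1,\mathbb L)$-$N$-CO-SF is called optimal if $M=N$. An $n\times n$ complex matrix $\mathbf U$ is unitary-like if $\mathbf U\mathbf U^H=\mathbf U^H\mathbf U=\alpha\mathbf I_n$ for some real $\alpha>0$. Connection operator: for a vector $\mathbf v=(v_0,\dots,v_{K'-1})$ and an indexed set $\mathbb A=(\mathbf a_0,\dots,\mathbf a_{M-1})$ of $M$ sequences of common length $L$, with $K=\mathrm{lcm}(M,K')$,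 $\mathbf v\odot\mathbb A$ is the length-$KL$ concatenation $\big(v_{[k]_{K'}}\mathbf a_{[k]_M}\big)_{k=0}^{K-1}$, where $[a]_b$ is the remainder of $a$ modulo $b$. *)

theory Defs
  imports Complex_Main
begin

text \<open>A finite complex sequence is a list; it is extended by zero outside its support.\<close>
definition seqval :: "complex list \<Rightarrow> int \<Rightarrow> complex" where
  "seqval xs n = (if 0 \<le> n \<and> n < int (length xs) then xs ! nat n else 0)"

definition acorr :: "complex list \<Rightarrow> complex list \<Rightarrow> int \<Rightarrow> complex" where
  "acorr s s' \<tau> = (\<Sum>l<length s. seqval s (int l) * cnj (seqval s' (int l + \<tau>)))"

definition energy :: "complex list \<Rightarrow> complex" where
  "energy s = acorr s s 0"

definition is_CO_SF :: "nat \<Rightarrow> nat \<Rightarrow> nat set \<Rightarrow> complex list list \<Rightarrow> bool" where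
  "is_CO_SF N M Ls fam \<longleftrightarrow>
     length fam = M \<and>
     (\<forall>s\<in>set fam. N dvd length s) \<and>
     Ls = set (map length fam) \<and>
     (\<forall>m<M. \<forall>m'<M. \<forall>k::int.
        acorr (fam ! m) (fam ! m') (k * int N) =
          (if m = m' \<and> k = 0 then energy (fam ! m) else 0))"

definition is_optimal_CO_SF :: "nat \<Rightarrow> nat \<Rightarrow> nat set \<Rightarrow> complex list list \<Rightarrow> bool" where
  "is_optimal_CO_SF N M Ls fam \<longleftrightarrow> is_CO_SF N M Ls fam \<and> M = N"

definition unitary_like :: "nat \<Rightarrow> (nat \<Rightarrow> nat \<Rightarrow> complex) \<Rightarrow> bool" where
  "unitary_like n U \<longleftrightarrow> (\<exists>\<alpha>::real. \<alpha> > 0 \<and>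
     (\<forall>i<n. \<forall>j<n. (\<Sum>k<n. U i k * cnj (U j k)) = (if i = j then complex_of_real \<alpha> else 0)) \<and>
     (\<forall>i<n. \<forall>j<n. (\<Sum>k<n. cnj (U k i) * U k j) = (if i = j then complex_of_real \<alpha> else 0)))"

definition mat_row :: "nat \<Rightarrow> (nat \<Rightarrow> nat \<Rightarrow> complex) \<Rightarrow> nat \<Rightarrow> complex list" where
  "mat_row n U i = map (\<lambda>k. U i k) [0..<n]"

definition connect :: "complex list \<Rightarrow> complex list list \<Rightarrow> complex list" where
  "connect v A = concat (map (\<lambda>k. map (\<lambda>x. v ! (k mod length v) * x) (A ! (k mod length A)))
                            [0..<lcm (length A) (length v)])"

end

theory Submission
  imports Defs
begin

(* Every connected sequence v \<odot> A^(p) is a block sequence: n_p blocks of length N,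
   block a being v_a times a row of U.  At a shift k*N the aperiodic correlation of
   two block sequences aligns whole blocks (acorr_block_seq), so it is a sum of
   inner products of rows of U.  Orthogonality of the rows of U and injectivity of
   the labelling sigma kill every term unless both sequences come from the same group
   p and k = 0 (acorr_partition_seqs); in that remaining case the correlation is an
   inner product of two rows of V_p, which vanishes for distinct rows.  Finally an
   abstract criterion (CO_SF_of_indexed_family) turns these pairwise relations into
   the CO-SF property of the listed family, whose size is N by the bijectivity of sigma. *)

definition block_seq :: "nat \<Rightarrow> nat \<Rightarrow> (nat \<Rightarrow> nat \<Rightarrow> complex) \<Rightarrow> complex list" where
  "block_seq n N f = map (\<lambda>l. f (l div N) (l mod N)) [0..<n * N]"

lemma length_block_seq [simp]: "length (block_seq n N f) = n * N"
  by (simp add: block_seq_def)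

lemma block_seq_Suc: "block_seq (Suc n) N f = block_seq n N f @ map (f n) [0..<N]"
proof -
  have "[0..<n * N + N] = [0..<n * N] @ [n * N..<n * N + N]"
    by (rule upt_add_eq_append) simp
  moreover have "map (\<lambda>l. f (l div N) (l mod N)) [n * N..<n * N + N] = map (f n) [0..<N]"
    by (rule nth_equalityI) auto
  ultimately show ?thesis unfolding block_seq_def by (simp add: add.commute)
qed

lemma concat_eq_block_seq:
  "concat (map (\<lambda>a. map (f a) [0..<N]) [0..<n]) = block_seq n N f"
proof (induction n)
  case 0
  then show ?case by (simp add: block_seq_def)
next
  case (Suc n)
  then show ?case by (simp add: block_seq_Suc)
qed

(* When the coefficient vector and the sequence set have the same size n and all
   sequences have length N, the lcm in the connection operator is n and v \<odot> A
   is the block sequence with blocks v_a * a_a. *)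
lemma connect_eq_block_seq:
  assumes "length v = n" "length A = n" "\<forall>x\<in>set A. length x = N"
  shows "connect v A = block_seq n N (\<lambda>a i. v ! a * A ! a ! i)"
proof -
  have "connect v A = concat (map (\<lambda>a. map (\<lambda>x. v ! a * x) (A ! a)) [0..<n])"
    using assms(1,2) by (auto simp: connect_def intro!: arg_cong[where f = concat])
  also have "\<dots> = concat (map (\<lambda>a. map (\<lambda>i. v ! a * A ! a ! i) [0..<N]) [0..<n])"
  proof (intro arg_cong[where f = concat] map_cong refl)
    fix a assume "a \<in> set [0..<n]"
    then have "length (A ! a) = N" using assms(2,3) by simp
    then show "map (\<lambda>x. v ! a * x) (A ! a) = map (\<lambda>i. v ! a * A ! a ! i) [0..<N]"
      by (intro nth_equalityI) auto
  qed
  finally show ?thesis by (simp add: concat_eq_block_seq)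
qed

lemma connect_mat_rows:
  "connect (mat_row n W m) (map (\<lambda>j. mat_row N U (\<tau> j)) [0..<n]) =
     block_seq n N (\<lambda>a i. W m a * U (\<tau> a) i)"
proof -
  have "connect (mat_row n W m) (map (\<lambda>j. mat_row N U (\<tau> j)) [0..<n]) =
      block_seq n N (\<lambda>a i. mat_row n W m ! a * map (\<lambda>j. mat_row N U (\<tau> j)) [0..<n] ! a ! i)"
    by (rule connect_eq_block_seq) (auto simp: mat_row_def)
  also have "\<dots> = block_seq n N (\<lambda>a i. W m a * U (\<tau> a) i)"
    unfolding block_seq_def
  proof (intro map_cong refl)
    fix l assume "l \<in> set [0..<n * N]"
    then have "l < n * N" by simp
    then have "l div N < n" "l mod N < N"
      by (simp_all add: less_mult_imp_div_less) (metis mod_less_divisor mult_0_right not_less0 neq0_conv)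
    then show "mat_row n W m ! (l div N) * map (\<lambda>j. mat_row N U (\<tau> j)) [0..<n] ! (l div N) ! (l mod N) =
        W m (l div N) * U (\<tau> (l div N)) (l mod N)"
      by (simp add: mat_row_def)
  qed
  finally show ?thesis .
qed

lemma seqval_block_seq:
  assumes "i < N"
  shows "seqval (block_seq n N g) (c * int N + int i) = (if 0 \<le> c \<and> c < int n then g (nat c) i else 0)"
proof (cases "0 \<le> c \<and> c < int n")
  case True
  define b where "b = nat c"
  have b: "c = int b" "b < n" using True by (auto simp: b_def)
  have "b * N + i < Suc b * N" using assms by simp
  also have "\<dots> \<le> n * N" using b(2) by (intro mult_right_mono) auto
  finally have "b * N + i < n * N" .
  moreover have "c * int N + int i = int (b * N + i)" using b(1) by simp
  ultimately show ?thesis using assms b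
    unfolding seqval_def block_seq_def by (simp only: of_nat_less_iff nat_int) simp
next
  case False
  have "\<not> (0 \<le> c * int N + int i \<and> c * int N + int i < int (n * N))"
  proof (cases "c < 0")
    case True
    then have "c * int N \<le> - int N" using mult_right_mono[of c "-1" "int N"] by simp
    then show ?thesis using assms by simp
  next
    case False
    then have "int n * int N \<le> c * int N" using \<open>\<not> (0 \<le> c \<and> c < int n)\<close>
      by (intro mult_right_mono) auto
    then show ?thesis by simp
  qed
  then show ?thesis using False unfolding seqval_def by auto
qed

lemma sum_blocks:
  fixes h :: "nat \<Rightarrow> 'a::comm_monoid_add"
  shows "(\<Sum>l<n * N. h l) = (\<Sum>a<n. \<Sum>i<N. h (a * N + i))"
proof -
  have "(\<Sum>i<N. h (a * N + i)) = sum h {a * N..<a * N + N}" for a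
    using sum.shift_bounds_nat_ivl[of h 0 "a * N" N] by (simp add: lessThan_atLeast0 add.commute)
  then show ?thesis by (simp add: sum.nat_group)
qed

lemma acorr_block_seq:
  "acorr (block_seq n N f) (block_seq n' N g) (k * int N) =
     (\<Sum>a<n. if 0 \<le> int a + k \<and> int a + k < int n'
             then (\<Sum>i<N. f a i * cnj (g (nat (int a + k)) i)) else 0)"
proof -
  have shift: "int (a * N + i) + k * int N = (int a + k) * int N + int i" for a i
    by (simp add: algebra_simps)
  have other: "seqval (block_seq n' N g) (int (a * N + i) + k * int N) =
      (if 0 \<le> int a + k \<and> int a + k < int n' then g (nat (int a + k)) i else 0)" if "i < N" for a i
    unfolding shift by (rule seqval_block_seq[OF that])
  have own: "seqval (block_seq n N f) (int (a * N + i)) = f a i" if "a < n" "i < N" for a i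
    using seqval_block_seq[OF that(2), of n f "int a"] that by simp
  have "acorr (block_seq n N f) (block_seq n' N g) (k * int N) =
      (\<Sum>a<n. \<Sum>i<N. seqval (block_seq n N f) (int (a * N + i)) *
                        cnj (seqval (block_seq n' N g) (int (a * N + i) + k * int N)))"
    unfolding acorr_def length_block_seq by (rule sum_blocks)
  also have "\<dots> = (\<Sum>a<n. \<Sum>i<N. f a i *
      cnj (if 0 \<le> int a + k \<and> int a + k < int n' then g (nat (int a + k)) i else 0))"
    by (intro sum.cong refl) (simp only: own other lessThan_iff)
  also have "\<dots> = (\<Sum>a<n. if 0 \<le> int a + k \<and> int a + k < int n'
             then (\<Sum>i<N. f a i * cnj (g (nat (int a + k)) i)) else 0)"
    by (intro sum.cong refl) auto
  finally show ?thesis .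
qed

lemma acorr_block_seq_rows:
  fixes U :: "nat \<Rightarrow> nat \<Rightarrow> complex" and \<alpha> :: complex
  assumes orth: "\<forall>i<N. \<forall>j<N. (\<Sum>l<N. U i l * cnj (U j l)) = (if i = j then \<alpha> else 0)"
    and rows: "\<forall>a<n. \<tau> a < N" "\<forall>b<n'. \<tau>' b < N"
  shows "acorr (block_seq n N (\<lambda>a i. v a * U (\<tau> a) i)) (block_seq n' N (\<lambda>b i. w b * U (\<tau>' b) i)) (k * int N) =
     \<alpha> * (\<Sum>a<n. if 0 \<le> int a + k \<and> int a + k < int n' \<and> \<tau> a = \<tau>' (nat (int a + k))
                  then v a * cnj (w (nat (int a + k))) else 0)"
proof -
  have inner: "(\<Sum>i<N. v a * U (\<tau> a) i * cnj (w b * U (\<tau>' b) i)) =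
      (if \<tau> a = \<tau>' b then \<alpha> * (v a * cnj (w b)) else 0)" if "a < n" "b < n'" for a b
  proof -
    have "(\<Sum>i<N. v a * U (\<tau> a) i * cnj (w b * U (\<tau>' b) i)) =
        v a * cnj (w b) * (\<Sum>i<N. U (\<tau> a) i * cnj (U (\<tau>' b) i))"
      by (simp add: sum_distrib_left mult_ac)
    then show ?thesis using orth rows that by simp
  qed
  show ?thesis
    unfolding acorr_block_seq sum_distrib_left
  proof (intro sum.cong refl)
    fix a assume "a \<in> {..<n}"
    then show "(if 0 \<le> int a + k \<and> int a + k < int n'
          then \<Sum>i<N. v a * U (\<tau> a) i * cnj (w (nat (int a + k)) * U (\<tau>' (nat (int a + k))) i) else 0) =
        \<alpha> * (if 0 \<le> int a + k \<and> int a + k < int n' \<and> \<tau> a = \<tau>' (nat (int a + k))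
          then v a * cnj (w (nat (int a + k))) else 0)"
      using inner[of a "nat (int a + k)"] by auto
  qed
qed

(* Since sigma is injective on the pairs (p,a), distinct labels meet
   only for p = p' and k = 0, where the correlation is alpha times the inner product
   of rows m and m' of V p. *)
lemma acorr_partition_seqs:
  fixes U :: "nat \<Rightarrow> nat \<Rightarrow> complex" and \<alpha> :: complex
  assumes orth: "\<forall>i<N. \<forall>j<N. (\<Sum>l<N. U i l * cnj (U j l)) = (if i = j then \<alpha> else 0)"
    and inj: "inj_on (\<lambda>(p, j). \<sigma> p j) {(p, j). p < P \<and> j < n p}"
    and rng: "\<forall>p<P. \<forall>j<n p. \<sigma> p j < N"
    and p: "p < P" "p' < P"
  shows "acorr (block_seq (n p) N (\<lambda>a i. V p m a * U (\<sigma> p a) i))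
               (block_seq (n p') N (\<lambda>b i. V p' m' b * U (\<sigma> p' b) i)) (k * int N) =
     (if p = p' \<and> k = 0 then \<alpha> * (\<Sum>a<n p. V p m a * cnj (V p m' a)) else 0)"
proof -
  have hit: "(0 \<le> int a + k \<and> int a + k < int (n p') \<and> \<sigma> p a = \<sigma> p' (nat (int a + k)))
      \<longleftrightarrow> p = p' \<and> k = 0" if "a < n p" for a
  proof
    assume h: "0 \<le> int a + k \<and> int a + k < int (n p') \<and> \<sigma> p a = \<sigma> p' (nat (int a + k))"
    then have "(p, a) = (p', nat (int a + k))"
      using inj_onD[OF inj, of "(p, a)" "(p', nat (int a + k))"] p that by auto
    then show "p = p' \<and> k = 0" using h by auto
  qed (use that in auto)
  have "acorr (block_seq (n p) N (\<lambda>a i. V p m a * U (\<sigma> p a) i))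
               (block_seq (n p') N (\<lambda>b i. V p' m' b * U (\<sigma> p' b) i)) (k * int N) =
      \<alpha> * (\<Sum>a<n p. if 0 \<le> int a + k \<and> int a + k < int (n p') \<and> \<sigma> p a = \<sigma> p' (nat (int a + k))
                    then V p m a * cnj (V p' m' (nat (int a + k))) else 0)"
    using rng p by (intro acorr_block_seq_rows[OF orth]) auto
  also have "\<dots> = \<alpha> * (\<Sum>a<n p. if p = p' \<and> k = 0 then V p m a * cnj (V p' m' (nat (int a + k))) else 0)"
    by (intro arg_cong[where f = "(*) \<alpha>"] sum.cong refl) (simp add: hit)
  finally show ?thesis by auto
qed

definition dep_pairs :: "nat \<Rightarrow> (nat \<Rightarrow> nat) \<Rightarrow> (nat \<times> nat) list" where
  "dep_pairs P n = concat (map (\<lambda>p. map (Pair p) [0..<n p]) [0..<P])"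

lemma set_dep_pairs: "set (dep_pairs P n) = {(p, j). p < P \<and> j < n p}"
  by (auto simp: dep_pairs_def)

lemma distinct_dep_pairs: "distinct (dep_pairs P n)"
  by (induction P) (auto simp: dep_pairs_def distinct_map inj_on_def)

lemma CO_SF_of_indexed_family:
  assumes dist: "distinct idx"
    and dvd: "\<forall>x\<in>set idx. N dvd length (F x)"
    and orth: "\<forall>x\<in>set idx. \<forall>y\<in>set idx. \<forall>k::int. x \<noteq> y \<or> k \<noteq> 0 \<longrightarrow> acorr (F x) (F y) (k * int N) = 0"
  shows "is_CO_SF N (length idx) (length ` F ` set idx) (map F idx)"
  unfolding is_CO_SF_def
proof (intro conjI allI impI)
  fix m m' :: nat and k :: int
  assume m: "m < length idx" and m': "m' < length idx"
  show "acorr (map F idx ! m) (map F idx ! m') (k * int N) =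
      (if m = m' \<and> k = 0 then energy (map F idx ! m) else 0)"
  proof (cases "m = m' \<and> k = 0")
    case False
    then have "idx ! m \<noteq> idx ! m' \<or> k \<noteq> 0" using nth_eq_iff_index_eq[OF dist m m'] by blast
    then have "acorr (F (idx ! m)) (F (idx ! m')) (k * int N) = 0" using orth m m' by simp
    then show ?thesis using m m' False by auto
  qed (simp add: energy_def)
qed (use dvd in \<open>auto simp: image_image\<close>)

lemma unitary_like_row_gram:
  assumes "unitary_like n W"
  obtains \<alpha> :: complex where
    "\<forall>i<n. \<forall>j<n. (\<Sum>k<n. W i k * cnj (W j k)) = (if i = j then \<alpha> else 0)"
  using assms unfolding unitary_like_def by blast

theorem theorem2:
  fixes N P :: nat
    and U :: "nat \<Rightarrow> nat \<Rightarrow> complex"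
    and n :: "nat \<Rightarrow> nat"
    and \<sigma> :: "nat \<Rightarrow> nat \<Rightarrow> nat"
    and V :: "nat \<Rightarrow> nat \<Rightarrow> nat \<Rightarrow> complex"
  assumes "N \<ge> 1"
    and "unitary_like N U"
    and "\<forall>p<P. n p \<ge> 1"
    and "bij_betw (\<lambda>(p, j). \<sigma> p j) {(p, j). p < P \<and> j < n p} {..<N}"
    and "\<forall>p<P. unitary_like (n p) (V p)"
  shows "is_optimal_CO_SF N N ((\<lambda>p. n p * N) ` {..<P})
           (concat (map (\<lambda>p. map (\<lambda>m. connect (mat_row (n p) (V p) m)
                                            (map (\<lambda>j. mat_row N U (\<sigma> p j)) [0..<n p]))
                                 [0..<n p])
                        [0..<P]))"
proof -
  define seq where "seq = (\<lambda>(p, m). block_seq (n p) N (\<lambda>a i. V p m a * U (\<sigma> p a) i))"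
  obtain \<alpha> where U_orth: "\<forall>i<N. \<forall>j<N. (\<Sum>l<N. U i l * cnj (U j l)) = (if i = j then \<alpha> else 0)"
    using unitary_like_row_gram[OF assms(2)] by blast
  have inj: "inj_on (\<lambda>(p, j). \<sigma> p j) {(p, j). p < P \<and> j < n p}"
    using assms(4) by (rule bij_betw_imp_inj_on)
  have rng: "\<forall>p<P. \<forall>j<n p. \<sigma> p j < N"
    using bij_betw_apply[OF assms(4)] by auto
  have V_orth: "(\<Sum>a<n p. V p m a * cnj (V p m' a)) = 0" if "p < P" "m < n p" "m' < n p" "m \<noteq> m'" for p m m'
    using unitary_like_row_gram[OF assms(5)[rule_format, OF that(1)]] that(2-4) by metis
  have fam: "concat (map (\<lambda>p. map (\<lambda>m. connect (mat_row (n p) (V p) m)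
                (map (\<lambda>j. mat_row N U (\<sigma> p j)) [0..<n p])) [0..<n p]) [0..<P]) = map seq (dep_pairs P n)"
    by (simp add: dep_pairs_def map_concat connect_mat_rows seq_def comp_def)
  have card: "length (dep_pairs P n) = N"
    using distinct_card[OF distinct_dep_pairs] bij_betw_same_card[OF assms(4)] by (simp add: set_dep_pairs)
  have lengths: "length ` seq ` set (dep_pairs P n) = (\<lambda>p. n p * N) ` {..<P}"
  proof -
    have "length ` seq ` set (dep_pairs P n) = (\<lambda>(p, j). n p * N) ` {(p, j). p < P \<and> j < n p}"
      unfolding set_dep_pairs image_image seq_def by (simp add: case_prod_beta)
    also have "\<dots> = (\<lambda>p. n p * N) ` {..<P}"
    proof (intro equalityI subsetI)
      fix x assume "x \<in> (\<lambda>p. n p * N) ` {..<P}"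
      then obtain p where "p < P" "x = n p * N" by auto
      with assms(3) show "x \<in> (\<lambda>(p, j). n p * N) ` {(p, j). p < P \<and> j < n p}"
        by (intro rev_image_eqI[of "(p, 0)"]) auto
    qed auto
    finally show ?thesis .
  qed
  have seq_dvd: "\<forall>x\<in>set (dep_pairs P n). N dvd length (seq x)"
    by (auto simp: seq_def)
  have seq_orth: "\<forall>x\<in>set (dep_pairs P n). \<forall>y\<in>set (dep_pairs P n). \<forall>k::int.
      x \<noteq> y \<or> k \<noteq> 0 \<longrightarrow> acorr (seq x) (seq y) (k * int N) = 0"
  proof (intro ballI allI impI)
    fix x y :: "nat \<times> nat" and k :: int
    assume x: "x \<in> set (dep_pairs P n)" and y: "y \<in> set (dep_pairs P n)" and ne: "x \<noteq> y \<or> k \<noteq> 0"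
    obtain p m p' m' where xy: "x = (p, m)" "y = (p', m')" by fastforce
    have pm: "p < P" "m < n p" "p' < P" "m' < n p'" using x y xy by (auto simp: set_dep_pairs)
    have "acorr (seq x) (seq y) (k * int N) =
        (if p = p' \<and> k = 0 then \<alpha> * (\<Sum>a<n p. V p m a * cnj (V p m' a)) else 0)"
      unfolding xy seq_def prod.case by (rule acorr_partition_seqs[OF U_orth inj rng pm(1,3)])
    also have "\<dots> = 0" using V_orth[of p m m'] ne xy pm by auto
    finally show "acorr (seq x) (seq y) (k * int N) = 0" .
  qed
  have "is_CO_SF N N ((\<lambda>p. n p * N) ` {..<P}) (map seq (dep_pairs P n))"
    using CO_SF_of_indexed_family[OF distinct_dep_pairs seq_dvd seq_orth] unfolding card lengths .
  then show ?thesis unfolding is_optimal_CO_SF_def fam by blast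
qed

end
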